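(* Let $R\subseteq T$ be an integral extension of rings, let $Q\in\mathrm{Spec}(T)$ and $P=Q\cap R$. Assume that $R$ has a maximal subring $S$ which is integrally closed in $R$, with $(S:R)=P$ and $U(R/P)\not\subseteq S/P$. Then $T$ has a maximal subring $V$ which is integrally closed in $T$ with $(V:T)=Q$.
   Context: All rings are commutative with $1\neq0$ and subrings are unital. A maximal subring of a ring $A$ is a proper subring maximal with respect to inclusion among proper subrings of $A$. For a ring extension $S\subseteq R$, the conductor is $(S:R)=\{x\in R\mid Rx\subseteq S\}$. $U(A)$ denotes the unit group of $A$. *)

theory Defs
  imports Main
begin

definition subring :: "'a::comm_ring_1 set \<Rightarrow> bool" where
  "subring A \<longleftrightarrow> 1 \<in> A \<and> (\<forall>x\<in>A. \<forall>y\<in>A. x - y \<in> A \<and> x * y \<in> A)"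

definition maximal_subring :: "'a::comm_ring_1 set \<Rightarrow> 'a set \<Rightarrow> bool" where
  "maximal_subring S R \<longleftrightarrow> subring S \<and> S \<subset> R \<and>
     (\<forall>S'. subring S' \<and> S \<subseteq> S' \<and> S' \<subset> R \<longrightarrow> S' = S)"

definition integral_over :: "'a::comm_ring_1 set \<Rightarrow> 'a \<Rightarrow> bool" where
  "integral_over A x \<longleftrightarrow>
     (\<exists>n c. (\<forall>i<n. c i \<in> A) \<and> x ^ n + (\<Sum>i<n. c i * x ^ i) = 0)"

definition integrally_closed_in :: "'a::comm_ring_1 set \<Rightarrow> 'a set \<Rightarrow> bool" where
  "integrally_closed_in S R \<longleftrightarrow> (\<forall>x\<in>R. integral_over S x \<longrightarrow> x \<in> S)"

definition integral_extension :: "'a::comm_ring_1 set \<Rightarrow> 'a set \<Rightarrow> bool" where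
  "integral_extension R T \<longleftrightarrow> subring R \<and> subring T \<and> R \<subseteq> T \<and> (\<forall>x\<in>T. integral_over R x)"

definition conductor :: "'a::comm_ring_1 set \<Rightarrow> 'a set \<Rightarrow> 'a set" where
  "conductor S R = {x \<in> R. \<forall>r\<in>R. r * x \<in> S}"

definition ideal_in :: "'a::comm_ring_1 set \<Rightarrow> 'a set \<Rightarrow> bool" where
  "ideal_in I T \<longleftrightarrow> I \<subseteq> T \<and> 0 \<in> I \<and> (\<forall>x\<in>I. \<forall>y\<in>I. x - y \<in> I) \<and> (\<forall>x\<in>I. \<forall>t\<in>T. t * x \<in> I)"

definition prime_ideal_in :: "'a::comm_ring_1 set \<Rightarrow> 'a set \<Rightarrow> bool" where
  "prime_ideal_in Q T \<longleftrightarrow> ideal_in Q T \<and> Q \<noteq> T \<and>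
     (\<forall>a\<in>T. \<forall>b\<in>T. a * b \<in> Q \<longrightarrow> a \<in> Q \<or> b \<in> Q)"

text \<open>Units of R/P not contained in S/P (for an ideal P of R): some class x+P, x in R,
  is a unit of R/P but is not of the form s+P with s in S.\<close>
definition units_quot_not_sub :: "'a::comm_ring_1 set \<Rightarrow> 'a set \<Rightarrow> 'a set \<Rightarrow> bool" where
  "units_quot_not_sub R P S \<longleftrightarrow>
     (\<exists>x\<in>R. (\<exists>y\<in>R. x * y - 1 \<in> P) \<and> \<not> (\<exists>s\<in>S. x - s \<in> P))"

end

(*
  The hypothesis on U(R/P) provides x \<in> R, not in S + P, with an inverse y modulo P. The inverse
  lies in S: otherwise R = S[y], and x \<in> S[y] with x y = 1 mod P \<subseteq> S is integral over S.
  By Zorn's lemma choose V \<supseteq> S + Q maximal among the subrings of T not containing x.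
  Since Q \<subseteq> V and y \<in> V, any element of T integral over V and outside V would give
  x \<in> V[z] integral over V, and an integral x with inverse y \<in> V modulo Q lies in V; so V is
  integrally closed in T. Clearing denominators by powers of y shows T = V[x], so V is a maximal
  subring. Finally V \<inter> R = S, so the conductor (V:T) is an ideal of T above Q whose contraction
  to R lies in (S:R) = P; as T is integral over R and Q is prime, (V:T) = Q.
*)

theory Submission
  imports Defs "Jordan_Normal_Form.Char_Poly"
begin

lemma subring_one: "subring V \<Longrightarrow> 1 \<in> V"
  by (simp add: subring_def)

lemma subring_diff: "subring V \<Longrightarrow> a \<in> V \<Longrightarrow> b \<in> V \<Longrightarrow> a - b \<in> V"
  by (simp add: subring_def)

lemma subring_mult: "subring V \<Longrightarrow> a \<in> V \<Longrightarrow> b \<in> V \<Longrightarrow> a * b \<in> V"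
  by (simp add: subring_def)

lemma subring_zero: "subring V \<Longrightarrow> 0 \<in> V"
  using subring_diff[of V 1 1] subring_one by auto

lemma subring_uminus: "subring V \<Longrightarrow> a \<in> V \<Longrightarrow> - a \<in> V"
  using subring_diff[of V 0 a] subring_zero by auto

lemma subring_add: "subring V \<Longrightarrow> a \<in> V \<Longrightarrow> b \<in> V \<Longrightarrow> a + b \<in> V"
  using subring_diff[of V a "- b"] subring_uminus[of V b] by auto

lemma subring_sum: "subring V \<Longrightarrow> (\<And>i. i \<in> A \<Longrightarrow> f i \<in> V) \<Longrightarrow> sum f A \<in> V"
  by (induction A rule: infinite_finite_induct) (auto simp: subring_zero subring_add)

lemma subring_prod: "subring V \<Longrightarrow> (\<And>i. i \<in> A \<Longrightarrow> f i \<in> V) \<Longrightarrow> prod f A \<in> V"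
  by (induction A rule: infinite_finite_induct) (auto simp: subring_one subring_mult)

lemma subring_power: "subring V \<Longrightarrow> a \<in> V \<Longrightarrow> a ^ n \<in> V"
  by (induction n) (auto simp: subring_one subring_mult)

lemma subring_Int: "subring V \<Longrightarrow> subring W \<Longrightarrow> subring (V \<inter> W)"
  by (simp add: subring_def)

lemma ideal_in_subset: "ideal_in Q T \<Longrightarrow> Q \<subseteq> T"
  by (simp add: ideal_in_def)

lemma ideal_in_zero: "ideal_in Q T \<Longrightarrow> 0 \<in> Q"
  by (simp add: ideal_in_def)

lemma ideal_in_diff: "ideal_in Q T \<Longrightarrow> a \<in> Q \<Longrightarrow> b \<in> Q \<Longrightarrow> a - b \<in> Q"
  by (simp add: ideal_in_def)

lemma ideal_in_mult_left: "ideal_in Q T \<Longrightarrow> a \<in> Q \<Longrightarrow> t \<in> T \<Longrightarrow> t * a \<in> Q"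
  by (simp add: ideal_in_def)

lemma ideal_in_mult_right: "ideal_in Q T \<Longrightarrow> a \<in> Q \<Longrightarrow> t \<in> T \<Longrightarrow> a * t \<in> Q"
  using ideal_in_mult_left[of Q T a t] by (simp add: mult.commute)

lemma ideal_in_uminus: "ideal_in Q T \<Longrightarrow> a \<in> Q \<Longrightarrow> - a \<in> Q"
  using ideal_in_diff[of Q T 0 a] ideal_in_zero[of Q T] by simp

lemma ideal_in_add: "ideal_in Q T \<Longrightarrow> a \<in> Q \<Longrightarrow> b \<in> Q \<Longrightarrow> a + b \<in> Q"
  using ideal_in_diff[of Q T a "- b"] ideal_in_uminus[of Q T b] by simp

lemma ideal_in_sum: "ideal_in Q T \<Longrightarrow> (\<And>i. i \<in> A \<Longrightarrow> f i \<in> Q) \<Longrightarrow> sum f A \<in> Q"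
  by (induction A rule: infinite_finite_induct) (auto simp: ideal_in_zero ideal_in_add)

lemma ideal_in_Int_subring:
  assumes "ideal_in Q T" and "subring R" and "R \<subseteq> T"
  shows "ideal_in (Q \<inter> R) R"
  using assms unfolding ideal_in_def by (auto simp: subset_iff subring_zero subring_diff subring_mult)

lemma ideal_in_eq_if_one_mem:
  assumes "ideal_in Q T" and "1 \<in> Q"
  shows "Q = T"
  using assms ideal_in_mult_right[of Q T 1] ideal_in_subset[of Q T] by auto

lemma power_diff_one_mem_ideal:
  assumes T: "subring T" and Q: "ideal_in Q T" and w: "w \<in> T" and w1: "w - 1 \<in> Q"
  shows "w ^ k - 1 \<in> Q"
proof (induction k)
  case 0
  then show ?case using ideal_in_zero[OF Q] by simp
next
  case (Suc k)
  have "w ^ Suc k - 1 = w * (w ^ k - 1) + (w - 1)"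
    by (simp add: algebra_simps)
  also have "\<dots> \<in> Q"
    by (rule ideal_in_add[OF Q ideal_in_mult_left[OF Q Suc w] w1])
  finally show ?case .
qed

definition polys_over :: "'a::comm_ring_1 set \<Rightarrow> 'a poly set" where
  "polys_over V = {p. \<forall>i. coeff p i \<in> V}"

lemma polys_over_mono: "V \<subseteq> W \<Longrightarrow> polys_over V \<subseteq> polys_over W"
  unfolding polys_over_def by auto

lemma pCons_in_polys_over_iff: "pCons a p \<in> polys_over V \<longleftrightarrow> a \<in> V \<and> p \<in> polys_over V"
  unfolding polys_over_def by (auto simp: coeff_pCons split: nat.split)

lemma subring_polys_over:
  assumes V: "subring V"
  shows "subring (polys_over V)"
  unfolding subring_def polys_over_def
proof (intro conjI ballI CollectI allI)
  show "coeff 1 i \<in> V" for i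
    using V by (cases i) (simp_all add: subring_one subring_zero)
  fix p q i assume "p \<in> {p. \<forall>i. coeff p i \<in> V}" "q \<in> {p. \<forall>i. coeff p i \<in> V}"
  then have p: "\<And>i. coeff p i \<in> V" and q: "\<And>i. coeff q i \<in> V"
    by simp_all
  show "coeff (p - q) i \<in> V"
    by (simp add: subring_diff[OF V p q])
  show "coeff (p * q) i \<in> V"
    unfolding coeff_mult by (intro subring_sum[OF V] subring_mult[OF V p q])
qed

lemma const_in_polys_over: "subring V \<Longrightarrow> a \<in> V \<Longrightarrow> [:a:] \<in> polys_over V"
  unfolding polys_over_def by (auto simp: coeff_pCons subring_zero split: nat.split)

lemma monom_in_polys_over: "subring V \<Longrightarrow> a \<in> V \<Longrightarrow> monom a k \<in> polys_over V"
  by (simp add: polys_over_def subring_zero)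

lemma poly_in_subring:
  assumes W: "subring W" and t: "t \<in> W"
  shows "p \<in> polys_over W \<Longrightarrow> poly p t \<in> W"
  by (induction p)
    (auto simp: pCons_in_polys_over_iff subring_zero[OF W] subring_add[OF W] subring_mult[OF W t])

lemma poly_eq_sum_lessThan:
  fixes r :: "'a::comm_semiring_1 poly"
  assumes "degree r < n"
  shows "poly r t = (\<Sum>j<n. coeff r j * t ^ j)"
proof -
  have "poly r t = (\<Sum>j\<le>degree r. coeff r j * t ^ j)"
    by (rule poly_altdef)
  also have "\<dots> = (\<Sum>j<n. coeff r j * t ^ j)"
    by (rule sum.mono_neutral_left) (use assms in \<open>auto simp: coeff_eq_0\<close>)
  finally show ?thesis .
qed

lemma poly_eq_sum_atMost:
  fixes p :: "'a::comm_semiring_1 poly"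
  shows "degree p \<le> d \<Longrightarrow> poly p x = (\<Sum>i\<le>d. coeff p i * x ^ i)"
  using poly_eq_sum_lessThan[of p "Suc d" x] by (simp add: lessThan_Suc_atMost)

lemma integral_over_if_monic_root:
  assumes "f \<in> polys_over V" and "coeff f n = 1" and "degree f \<le> n" and "poly f z = 0"
  shows "integral_over V z"
  unfolding integral_over_def
proof (intro exI conjI)
  show "\<forall>i<n. coeff f i \<in> V"
    using assms(1) by (simp add: polys_over_def)
  have "poly f z = (\<Sum>i<Suc n. coeff f i * z ^ i)"
    using assms(3) by (intro poly_eq_sum_lessThan) simp
  also have "\<dots> = z ^ n + (\<Sum>i<n. coeff f i * z ^ i)"
    using assms(2) by (simp add: add.commute)
  finally show "z ^ n + (\<Sum>i<n. coeff f i * z ^ i) = 0"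
    using assms(4) by simp
qed

lemma det_in_polys_over:
  assumes V: "subring V" and M: "M \<in> carrier_mat n n"
    and entries: "\<And>i j. i < n \<Longrightarrow> j < n \<Longrightarrow> M $$ (i, j) \<in> polys_over V"
  shows "det M \<in> polys_over V"
proof -
  have PV: "subring (polys_over V)"
    using subring_polys_over[OF V] .
  have sign: "signof p \<in> polys_over V" for p :: "nat \<Rightarrow> nat"
    by (cases p rule: sign_cases) (auto intro: subring_one subring_uminus PV)
  show ?thesis
    unfolding det_def'[OF M]
  proof (rule subring_sum[OF PV])
    fix p assume "p \<in> {p. p permutes {0..<n}}"
    then have "p i < n" if "i < n" for i
      using permutes_in_image[of p "{0..<n}" i] that by simp
    then show "signof p * (\<Prod>i = 0..<n. M $$ (i, p i)) \<in> polys_over V"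
      by (intro subring_mult[OF PV sign] subring_prod[OF PV] entries) auto
  qed
qed

text \<open>The determinant trick: if multiplication by z maps the V-module spanned by
  g 0 = 1, ..., g (n-1) into itself, then det (z I - A) annihilates every g i, in particular 1,
  and the characteristic polynomial of A is a monic equation for z.\<close>

lemma determinant_trick:
  fixes z :: "'a::comm_ring_1" and g :: "nat \<Rightarrow> 'a" and a :: "nat \<Rightarrow> nat \<Rightarrow> 'a"
  assumes V: "subring V" and n: "0 < n" and g0: "g 0 = 1"
    and a: "\<And>i j. i < n \<Longrightarrow> j < n \<Longrightarrow> a i j \<in> V"
    and rel: "\<And>i. i < n \<Longrightarrow> z * g i = (\<Sum>j<n. a i j * g j)"
  shows "integral_over V z"
proof -
  define A where "A = mat n n (\<lambda>(i, j). a i j)"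
  define B where "B = mat n n (\<lambda>(i, j). (if i = j then z else 0) - a i j)"
  define gv where "gv = vec n g"
  have A: "A \<in> carrier_mat n n" and B: "B \<in> carrier_mat n n" and gv: "gv \<in> carrier_vec n"
    unfolding A_def B_def gv_def by simp_all
  have Bg: "B *\<^sub>v gv = 0\<^sub>v n"
  proof (rule eq_vecI)
    fix i assume "i < dim_vec (0\<^sub>v n :: 'a vec)"
    then have i: "i < n" by simp
    have "(B *\<^sub>v gv) $ i = (\<Sum>j\<in>{0..<n}. (if i = j then z * g j else 0) - a i j * g j)"
      using i unfolding B_def gv_def
      by (auto simp: scalar_prod_def row_def left_diff_distrib intro: sum.cong)
    also have "\<dots> = z * g i - (\<Sum>j<n. a i j * g j)"
      using i by (simp add: sum_subtractf atLeast0LessThan)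
    finally show "(B *\<^sub>v gv) $ i = 0\<^sub>v n $ i"
      using i rel[OF i] by simp
  qed (simp add: B_def)
  have "(det B \<cdot>\<^sub>m 1\<^sub>m n) *\<^sub>v gv = adj_mat B *\<^sub>v (B *\<^sub>v gv)"
    unfolding adj_mat(3)[OF B, symmetric] using adj_mat(1)[OF B] B gv by (rule assoc_mult_mat_vec)
  also have "\<dots> = 0\<^sub>v n"
    unfolding Bg using adj_mat(1)[OF B] by (intro eq_vecI) (auto simp: scalar_prod_def)
  finally have "((det B \<cdot>\<^sub>m 1\<^sub>m n) *\<^sub>v gv) $ 0 = 0"
    using n by simp
  moreover have "((det B \<cdot>\<^sub>m 1\<^sub>m n) *\<^sub>v gv) $ 0
      = (\<Sum>j = 0..<n. det B * (if j = 0 then 1 else 0) * g j)"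
    using n unfolding gv_def by (auto simp: scalar_prod_def row_def)
  moreover have "\<dots> = det B * g 0"
    using n by (simp add: if_distrib[of "\<lambda>u. det B * u"] if_distrib[of "\<lambda>u. u * g _"] sum.delta
        cong: if_cong)
  ultimately have detB: "det B = 0"
    using g0 by simp
  have "poly (char_poly A) z = det B"
    unfolding char_poly_def
    by (rule poly_det_cong[of B n]) (use A B in \<open>auto simp: char_poly_matrix_def A_def B_def\<close>)
  then have root: "poly (char_poly A) z = 0"
    using detB by simp
  have "char_poly A \<in> polys_over V"
    unfolding char_poly_def
  proof (rule det_in_polys_over[OF V])
    show "char_poly_matrix A \<in> carrier_mat n n"
      using A by simp
    fix i j assume ij: "i < n" "j < n"
    have PV: "subring (polys_over V)"
      using subring_polys_over[OF V] .
    have X: "[:0, 1:] \<in> polys_over V"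
      using monom_in_polys_over[OF V subring_one[OF V], of 1] by (simp add: monom_Suc one_pCons)
    have "char_poly_matrix A $$ (i, j) = [:0, 1:] * (if i = j then 1 else 0) + [:- a i j:]"
      using ij A unfolding char_poly_matrix_def A_def by simp
    also have "\<dots> \<in> polys_over V"
      by (intro subring_add[OF PV] subring_mult[OF PV X] const_in_polys_over[OF V]
          subring_uminus[OF V] a ij) (simp add: subring_one[OF PV] subring_zero[OF PV])
    finally show "char_poly_matrix A $$ (i, j) \<in> polys_over V" .
  qed
  then show ?thesis
    using integral_over_if_monic_root[OF _ _ _ root, of V n] degree_monic_char_poly[OF A] by simp
qed

definition adjoin :: "'a::comm_ring_1 set \<Rightarrow> 'a \<Rightarrow> 'a set" where
  "adjoin V t = {poly p t | p. p \<in> polys_over V}"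

lemma subring_adjoin:
  assumes V: "subring V"
  shows "subring (adjoin V t)"
proof -
  have PV: "subring (polys_over V)"
    using subring_polys_over[OF V] .
  have "poly 1 t \<in> adjoin V t" "poly (p - q) t \<in> adjoin V t" "poly (p * q) t \<in> adjoin V t"
    if "p \<in> polys_over V" "q \<in> polys_over V" for p q
    unfolding adjoin_def using that subring_one[OF PV] subring_diff[OF PV] subring_mult[OF PV] by blast+
  then show ?thesis
    unfolding subring_def adjoin_def using subring_one[OF PV] by fastforce
qed

lemma subset_adjoin: "subring V \<Longrightarrow> V \<subseteq> adjoin V t"
  unfolding adjoin_def by (force intro: const_in_polys_over)

lemma generator_in_adjoin: "subring V \<Longrightarrow> t \<in> adjoin V t"
  unfolding adjoin_def using monom_in_polys_over[of V 1 1] subring_one[of V]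
  by (force simp: poly_monom)

lemma adjoin_subset: "subring W \<Longrightarrow> V \<subseteq> W \<Longrightarrow> t \<in> W \<Longrightarrow> adjoin V t \<subseteq> W"
  unfolding adjoin_def using polys_over_mono poly_in_subring by blast

lemma adjoin_mono: "V \<subseteq> W \<Longrightarrow> adjoin V t \<subseteq> adjoin W t"
  unfolding adjoin_def using polys_over_mono by blast

lemma maximal_subring_adjoin_eq:
  assumes "maximal_subring S R" and "subring R" and "z \<in> R" and "z \<notin> S"
  shows "adjoin S z = R"
proof -
  have S: "subring S" and "S \<subset> R"
    using assms(1) by (simp_all add: maximal_subring_def)
  then have "adjoin S z \<subseteq> R"
    using adjoin_subset assms(2,3) by blast
  moreover have "adjoin S z \<noteq> S"
    using generator_in_adjoin[OF S] assms(4) by blast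
  ultimately show ?thesis
    using assms(1) subring_adjoin[OF S] subset_adjoin[OF S] unfolding maximal_subring_def by blast
qed

lemma reduce_mod_monic_root:
  fixes f r :: "'a::comm_ring_1 poly"
  assumes V: "subring V" and f: "f \<in> polys_over V" and fn: "coeff f n = 1" and fd: "degree f \<le> n"
    and n: "0 < n" and ft: "poly f t = 0"
  shows "r \<in> polys_over V \<Longrightarrow> \<exists>r'\<in>polys_over V. degree r' < n \<and> poly r' t = poly r t"
proof (induction "degree r" arbitrary: r rule: less_induct)
  case less
  show ?case
  proof (cases "degree r < n")
    case True
    then show ?thesis using less.prems by blast
  next
    case False
    define d where "d = degree r"
    define c where "c = coeff r d"
    define r1 where "r1 = r - monom c (d - n) * f"
    have nd: "n \<le> d"
      using False d_def by simp
    have PV: "subring (polys_over V)"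
      using subring_polys_over[OF V] .
    have "c \<in> V"
      using less.prems unfolding polys_over_def c_def by simp
    then have r1: "r1 \<in> polys_over V"
      unfolding r1_def
      by (intro subring_diff[OF PV less.prems] subring_mult[OF PV monom_in_polys_over[OF V] f])
    have "degree (monom c (d - n) * f) \<le> d"
      using degree_mult_le[of "monom c (d - n)" f] degree_monom_le[of c "d - n"] fd nd by linarith
    then have "degree r1 \<le> d"
      unfolding r1_def d_def by (intro degree_diff_le) simp_all
    moreover have "coeff r1 d = 0"
      using nd fn unfolding r1_def c_def by (simp add: coeff_monom_mult)
    ultimately have "degree r1 < d"
      using n nd by (cases "r1 = 0") (auto simp: le_less leading_coeff_0_iff)
    then obtain r' where "r' \<in> polys_over V" "degree r' < n" "poly r' t = poly r1 t"
      using less.hyps[OF _ r1] d_def by blast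
    moreover have "poly r1 t = poly r t"
      unfolding r1_def using ft by simp
    ultimately show ?thesis
      by auto
  qed
qed

text \<open>If t is integral of degree n, V[t] is generated as a V-module by 1, t, ..., t^(n-1), so the
  determinant trick applies to every z in V[t].\<close>

lemma integral_over_adjoin:
  fixes t z :: "'a::comm_ring_1"
  assumes V: "subring V" and t: "integral_over V t" and z: "z \<in> adjoin V t"
  shows "integral_over V z"
proof -
  obtain n c where c: "\<forall>i<n. c i \<in> V" and rel: "t ^ n + (\<Sum>i<n. c i * t ^ i) = 0"
    using t unfolding integral_over_def by blast
  show ?thesis
  proof (cases "n = 0")
    case True
    then have "(1::'a) = 0"
      using rel by simp
    then show ?thesis
      unfolding integral_over_def by (intro exI[of _ 0]) simp
  next
    case False
    have PV: "subring (polys_over V)"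
      using subring_polys_over[OF V] .
    define f where "f = monom 1 n + (\<Sum>i<n. monom (c i) i)"
    have f: "f \<in> polys_over V"
      unfolding f_def using c
      by (intro subring_add[OF PV] subring_sum[OF PV] monom_in_polys_over[OF V] subring_one[OF V]) auto
    have "coeff f n = 1" "degree f \<le> n" "poly f t = 0"
      unfolding f_def using rel by (auto simp: coeff_sum poly_sum poly_monom intro: degree_le)
    note reduce = reduce_mod_monic_root[OF V f this(1,2) _ this(3)]
    obtain p where p: "p \<in> polys_over V" "z = poly p t"
      using z unfolding adjoin_def by blast
    have "\<exists>r\<in>polys_over V. degree r < n \<and> poly r t = z * t ^ i" for i
      using reduce[of "p * monom 1 i"] False p
        subring_mult[OF PV p(1) monom_in_polys_over[OF V subring_one[OF V]]]
      by (simp add: poly_monom)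
    then obtain r where r: "\<And>i. r i \<in> polys_over V \<and> degree (r i) < n \<and> poly (r i) t = z * t ^ i"
      by metis
    show ?thesis
    proof (rule determinant_trick[OF V _ _, of n "\<lambda>i. t ^ i" "\<lambda>i j. coeff (r i) j"])
      show "coeff (r i) j \<in> V" for i j
        using r[of i] unfolding polys_over_def by simp
      show "z * t ^ i = (\<Sum>j<n. coeff (r i) j * t ^ j)" for i
        using r[of i] poly_eq_sum_lessThan[of "r i" n t] by simp
    qed (use False in simp_all)
  qed
qed

text \<open>Modulo I the element y acts as an inverse of x, so y^d f(x) is congruent to the
  reversed polynomial of f evaluated at y.\<close>

lemma power_mult_sum_reverse_mod_ideal:
  assumes T: "subring T" and I: "ideal_in I T" and x: "x \<in> T" and y: "y \<in> T"
    and xy: "x * y - 1 \<in> I" and c: "\<And>i. i \<le> d \<Longrightarrow> c i \<in> T"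
  shows "y ^ d * (\<Sum>i\<le>d. c i * x ^ i) - (\<Sum>i\<le>d. c i * y ^ (d - i)) \<in> I"
proof -
  have "y ^ d * (\<Sum>i\<le>d. c i * x ^ i) - (\<Sum>i\<le>d. c i * y ^ (d - i))
      = (\<Sum>i\<le>d. c i * y ^ (d - i) * ((x * y) ^ i - 1))"
    unfolding sum_distrib_left sum_subtractf[symmetric]
  proof (rule sum.cong[OF refl])
    fix i assume "i \<in> {..d}"
    then have "y ^ d = y ^ (d - i) * y ^ i"
      by (simp add: power_add[symmetric])
    then show "y ^ d * (c i * x ^ i) - c i * y ^ (d - i) = c i * y ^ (d - i) * ((x * y) ^ i - 1)"
      by (simp add: power_mult_distrib algebra_simps)
  qed
  also have "\<dots> \<in> I"
  proof (rule ideal_in_sum[OF I])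
    fix i assume "i \<in> {..d}"
    then show "c i * y ^ (d - i) * ((x * y) ^ i - 1) \<in> I"
      using power_diff_one_mem_ideal[OF T I subring_mult[OF T x y] xy]
      by (intro ideal_in_mult_left[OF I] subring_mult[OF T c subring_power[OF T y]]) auto
  qed
  finally show ?thesis .
qed

lemma integral_over_if_mem_adjoin_inverse_mod_ideal:
  assumes T: "subring T" and I: "ideal_in I T" and V: "subring V" and "I \<subseteq> V" and "V \<subseteq> T"
    and y: "y \<in> T" and xy: "x * y - 1 \<in> I" and x: "x \<in> adjoin V y"
  shows "integral_over V x"
proof -
  obtain p where p: "p \<in> polys_over V" and x_eq: "x = poly p y"
    using x unfolding adjoin_def by blast
  define m where "m = degree p"
  have "x \<in> T"
    using adjoin_subset[OF T \<open>V \<subseteq> T\<close> y] x by blast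
  moreover have "coeff p i \<in> T" for i
    using p \<open>V \<subseteq> T\<close> unfolding polys_over_def by blast
  moreover have "y * x - 1 \<in> I"
    using xy by (simp add: mult.commute)
  ultimately have "x ^ m * (\<Sum>i\<le>m. coeff p i * y ^ i) - (\<Sum>i\<le>m. coeff p i * x ^ (m - i)) \<in> I"
    using power_mult_sum_reverse_mod_ideal[OF T I y] by blast
  then obtain w where w: "w \<in> V" and "x ^ Suc m - (\<Sum>i\<le>m. coeff p i * x ^ (m - i)) = w"
    using \<open>I \<subseteq> V\<close> poly_eq_sum_atMost[of p m y] x_eq m_def by auto
  then have root: "x ^ Suc m - (\<Sum>i\<le>m. coeff p i * x ^ (m - i)) - w = 0"
    by simp
  define f where "f = monom 1 (Suc m) - (\<Sum>i\<le>m. monom (coeff p i) (m - i)) - [:w:]"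
  have PV: "subring (polys_over V)"
    using subring_polys_over[OF V] .
  have "f \<in> polys_over V"
    unfolding f_def using p
    by (intro subring_diff[OF PV] monom_in_polys_over[OF V] subring_one[OF V] subring_sum[OF PV]
        const_in_polys_over[OF V] w) (auto simp: polys_over_def)
  moreover have "coeff f (Suc m) = 1" "degree f \<le> Suc m"
    unfolding f_def by (auto simp: coeff_sum coeff_pCons split: nat.split intro!: sum.neutral degree_le)
  moreover have "poly f x = 0"
    unfolding f_def using root by (simp add: poly_sum poly_monom)
  ultimately show ?thesis
    by (rule integral_over_if_monic_root)
qed

lemma inverse_mod_ideal_mem_maximal_subring:
  assumes R: "subring R" and S: "maximal_subring S R" "integrally_closed_in S R"
    and P: "ideal_in P R" "P \<subseteq> S"
    and x: "x \<in> R" "x \<notin> S" and y: "y \<in> R" and xy: "x * y - 1 \<in> P"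
  shows "y \<in> S"
proof (rule ccontr)
  assume "y \<notin> S"
  then have "x \<in> adjoin S y"
    using maximal_subring_adjoin_eq[OF S(1) R y] x by simp
  moreover have "subring S" "S \<subseteq> R"
    using S(1) by (auto simp: maximal_subring_def)
  ultimately have "integral_over S x"
    using integral_over_if_mem_adjoin_inverse_mod_ideal[OF R P(1) _ P(2) _ y xy] by blast
  then show False
    using S(2) x unfolding integrally_closed_in_def by blast
qed

lemma units_quot_not_sub_inverse_in_maximal_subring:
  assumes R: "subring R" and S: "maximal_subring S R" "integrally_closed_in S R"
    and P: "ideal_in P R" "P \<subseteq> S" and "units_quot_not_sub R P S"
  shows "\<exists>x\<in>R. \<exists>y\<in>S. x \<notin> S \<and> (\<forall>s\<in>S. x - s \<notin> P) \<and> x * y - 1 \<in> P"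
proof -
  obtain x y where x: "x \<in> R" "\<forall>s\<in>S. x - s \<notin> P" and y: "y \<in> R" "x * y - 1 \<in> P"
    using assms(6) unfolding units_quot_not_sub_def by blast
  have "x \<notin> S"
    using x ideal_in_zero[OF P(1)] by force
  then have "y \<in> S"
    using inverse_mod_ideal_mem_maximal_subring[OF R S P x(1) _ y] by blast
  with x y \<open>x \<notin> S\<close> show ?thesis
    by (intro bexI[of _ x] bexI[of _ y] conjI) simp_all
qed

lemma maximal_subring_Int_eq:
  assumes S: "maximal_subring S R" and R: "subring R"
    and V: "subring V" "S \<subseteq> V" and x: "x \<in> R" "x \<notin> V"
  shows "V \<inter> R = S"
proof -
  have "S \<subseteq> R"
    using S by (auto simp: maximal_subring_def)
  then have "subring (V \<inter> R)" "S \<subseteq> V \<inter> R" "V \<inter> R \<subset> R"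
    using subring_Int[OF V(1) R] V(2) x by blast+
  then show ?thesis
    using S unfolding maximal_subring_def by simp
qed

definition maximal_subring_avoiding :: "'a::comm_ring_1 \<Rightarrow> 'a set \<Rightarrow> 'a set \<Rightarrow> bool" where
  "maximal_subring_avoiding x V T \<longleftrightarrow> subring V \<and> V \<subseteq> T \<and> x \<notin> V \<and>
     (\<forall>W. subring W \<and> V \<subseteq> W \<and> W \<subseteq> T \<and> x \<notin> W \<longrightarrow> W = V)"

lemma subring_Union_chain:
  assumes "C \<noteq> {}" and "\<And>V. V \<in> C \<Longrightarrow> subring V" and "subset.chain A C"
  shows "subring (\<Union>C)"
  unfolding subring_def
proof (intro conjI ballI)
  show "1 \<in> \<Union>C"
    using assms(1,2) subring_one by blast
  fix a b assume "a \<in> \<Union>C" "b \<in> \<Union>C"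
  then obtain V where "V \<in> C" "a \<in> V" "b \<in> V"
    using assms(3) unfolding subset.chain_def by blast
  then show "a - b \<in> \<Union>C" "a * b \<in> \<Union>C"
    using assms(2) subring_diff subring_mult by blast+
qed

lemma exists_maximal_subring_avoiding:
  assumes "subring B" and "B \<subseteq> T" and "x \<notin> B"
  shows "\<exists>V. B \<subseteq> V \<and> maximal_subring_avoiding x V T"
proof -
  define F where "F = {V. subring V \<and> B \<subseteq> V \<and> V \<subseteq> T \<and> x \<notin> V}"
  have "\<exists>V\<in>F. \<forall>W\<in>F. V \<subseteq> W \<longrightarrow> W = V"
  proof (rule subset_Zorn_nonempty)
    show "F \<noteq> {}"
      using assms unfolding F_def by blast
    fix C assume "C \<noteq> {}" and chain: "subset.chain F C"
    then have "subring (\<Union>C)"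
      using subring_Union_chain[of C] unfolding F_def subset.chain_def by blast
    with \<open>C \<noteq> {}\<close> chain show "\<Union>C \<in> F"
      unfolding F_def subset.chain_def by blast
  qed
  then obtain V where "V \<in> F" and max: "\<And>W. W \<in> F \<Longrightarrow> V \<subseteq> W \<Longrightarrow> W = V"
    by blast
  then have V: "subring V" "B \<subseteq> V" "V \<subseteq> T" "x \<notin> V"
    unfolding F_def by simp_all
  have "W = V" if "subring W" "V \<subseteq> W" "W \<subseteq> T" "x \<notin> W" for W
    using max[of W] that V(2) unfolding F_def by blast
  with V show ?thesis
    unfolding maximal_subring_avoiding_def by (intro exI[of _ V] conjI allI impI) auto
qed

locale inverse_mod_ideal =
  fixes T Q V :: "'a::comm_ring_1 set" and x y :: 'a
  assumes subring_T: "subring T" and ideal_Q: "ideal_in Q T" and subring_V: "subring V"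
    and ideal_subset_V: "Q \<subseteq> V" and V_subset_T: "V \<subseteq> T"
    and x_in_T: "x \<in> T" and y_in_V: "y \<in> V" and inverse: "x * y - 1 \<in> Q"
begin

lemma y_in_T: "y \<in> T"
  using y_in_V V_subset_T by blast

lemma power_y_mult_poly_x_mem:
  assumes p: "p \<in> polys_over V" and "degree p \<le> d"
  shows "y ^ d * poly p x \<in> V"
proof -
  have coeff: "coeff p i \<in> V" for i
    using p by (simp add: polys_over_def)
  have "y ^ d * (\<Sum>i\<le>d. coeff p i * x ^ i) - (\<Sum>i\<le>d. coeff p i * y ^ (d - i)) \<in> Q"
    using coeff V_subset_T
    by (intro power_mult_sum_reverse_mod_ideal[OF subring_T ideal_Q x_in_T y_in_T inverse]) blast
  then have "y ^ d * poly p x - (\<Sum>i\<le>d. coeff p i * y ^ (d - i)) \<in> V"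
    unfolding poly_eq_sum_atMost[OF assms(2)] using ideal_subset_V by blast
  moreover have "(\<Sum>i\<le>d. coeff p i * y ^ (d - i)) \<in> V"
    by (intro subring_sum[OF subring_V] subring_mult[OF subring_V coeff]
        subring_power[OF subring_V y_in_V])
  ultimately show ?thesis
    using subring_add[OF subring_V] by fastforce
qed

text \<open>Multiplying a monic equation of degree m + 1 for x by y^m expresses x, modulo Q,
  as a polynomial in y.\<close>

lemma x_in_V_if_integral:
  assumes "integral_over V x"
  shows "x \<in> V"
proof -
  obtain n c where c: "\<forall>i<n. c i \<in> V" and rel: "x ^ n + (\<Sum>i<n. c i * x ^ i) = 0"
    using assms unfolding integral_over_def by blast
  show ?thesis
  proof (cases n)
    case 0
    then have "(1::'a) = 0"
      using rel by simp
    then have "x = 0"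
      by (metis mult_1 mult_zero_left)
    then show ?thesis
      using subring_zero[OF subring_V] by simp
  next
    case (Suc m)
    then have rel: "x ^ Suc m + (\<Sum>i\<le>m. c i * x ^ i) = 0" and c: "\<And>i. i \<le> m \<Longrightarrow> c i \<in> V"
      using rel c by (auto simp: lessThan_Suc_atMost)
    define reversed where "reversed = y ^ m * (\<Sum>i\<le>m. c i * x ^ i) - (\<Sum>i\<le>m. c i * y ^ (m - i))"
    define e where "e = x * ((x * y) ^ m - 1)"
    have "reversed \<in> Q"
      unfolding reversed_def using c V_subset_T
      by (intro power_mult_sum_reverse_mod_ideal[OF subring_T ideal_Q x_in_T y_in_T inverse]) blast
    moreover have "e \<in> Q"
      unfolding e_def using power_diff_one_mem_ideal[OF subring_T ideal_Q _ inverse]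
      by (intro ideal_in_mult_left[OF ideal_Q _ x_in_T]) (simp add: subring_mult[OF subring_T x_in_T y_in_T])
    moreover have "(\<Sum>i\<le>m. c i * y ^ (m - i)) \<in> V"
      by (intro subring_sum[OF subring_V] subring_mult[OF subring_V c] subring_power[OF subring_V y_in_V])
        simp
    ultimately have "- e - reversed - (\<Sum>i\<le>m. c i * y ^ (m - i)) \<in> V"
      using ideal_subset_V by (intro subring_diff[OF subring_V] subring_uminus[OF subring_V]) auto
    moreover have "x = y ^ m * (x ^ Suc m + (\<Sum>i\<le>m. c i * x ^ i)) - e - reversed - (\<Sum>i\<le>m. c i * y ^ (m - i))"
      unfolding e_def reversed_def by (simp add: power_mult_distrib algebra_simps)
    ultimately show ?thesis
      using rel by simp
  qed
qed

text \<open>Clearing denominators: writing the coefficients of an equation for t over R as polynomials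
  in x of degree at most d, the element y^d t is integral over V, hence lies in V, and
  t = x^d (y^d t) modulo Q.\<close>

lemma integral_mem_adjoin:
  assumes R: "R \<subseteq> adjoin V x" and closed: "integrally_closed_in V T"
    and t: "t \<in> T" and "integral_over R t"
  shows "t \<in> adjoin V x"
proof -
  obtain n c where c: "\<forall>i<n. c i \<in> R" and rel: "t ^ n + (\<Sum>i<n. c i * t ^ i) = 0"
    using assms(4) unfolding integral_over_def by blast
  have "\<forall>i. \<exists>p. i < n \<longrightarrow> p \<in> polys_over V \<and> c i = poly p x"
    using c R unfolding adjoin_def by blast
  then obtain p where p: "\<And>i. i < n \<Longrightarrow> p i \<in> polys_over V \<and> c i = poly (p i) x"
    by metis
  define d where "d = (\<Sum>i<n. degree (p i))"
  have yc: "y ^ d * c i \<in> V" if "i < n" for i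
    using p[OF that] member_le_sum[of i "{..<n}" "\<lambda>i. degree (p i)"] that
    by (auto simp: d_def intro: power_y_mult_poly_x_mem)
  define u where "u = y ^ d * t"
  define b where "b i = y ^ d * c i * y ^ (d * (n - Suc i))" for i
  have "b i * u ^ i = y ^ (d * n) * (c i * t ^ i)" if i: "i < n" for i
  proof -
    obtain k where k: "n = Suc (i + k)"
      using less_imp_Suc_add[OF i] by blast
    have "d + d * (n - Suc i) + d * i = d * n"
      unfolding k by (simp add: algebra_simps)
    then have "y ^ d * y ^ (d * (n - Suc i)) * y ^ (d * i) = y ^ (d * n)"
      by (simp add: power_add[symmetric])
    then show ?thesis
      unfolding b_def u_def by (simp add: power_mult_distrib power_mult algebra_simps)
  qed
  then have "u ^ n + (\<Sum>i<n. b i * u ^ i) = y ^ (d * n) * (t ^ n + (\<Sum>i<n. c i * t ^ i))"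
    unfolding distrib_left sum_distrib_left by (simp add: u_def power_mult_distrib power_mult)
  moreover have "b i \<in> V" if "i < n" for i
    unfolding b_def using yc[OF that] subring_power[OF subring_V y_in_V] subring_mult[OF subring_V] by blast
  ultimately have "integral_over V u"
    using rel unfolding integral_over_def by auto
  moreover have "u \<in> T"
    unfolding u_def using subring_mult[OF subring_T subring_power[OF subring_T y_in_T] t] .
  ultimately have u: "u \<in> V"
    using closed unfolding integrally_closed_in_def by blast
  define q where "q = t - x ^ d * u"
  have "q = - (t * ((x * y) ^ d - 1))"
    unfolding q_def u_def by (simp add: power_mult_distrib algebra_simps)
  then have "q \<in> Q"
    using power_diff_one_mem_ideal[OF subring_T ideal_Q subring_mult[OF subring_T x_in_T y_in_T] inverse]
    by (simp add: ideal_in_uminus[OF ideal_Q] ideal_in_mult_left[OF ideal_Q _ t])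
  then have "q \<in> V"
    using ideal_subset_V by blast
  then have "monom u d + [:q:] \<in> polys_over V"
    using subring_add[OF subring_polys_over[OF subring_V]] monom_in_polys_over[OF subring_V u]
      const_in_polys_over[OF subring_V] by blast
  moreover have "t = poly (monom u d + [:q:]) x"
    by (simp add: poly_monom q_def)
  ultimately show ?thesis
    unfolding adjoin_def by blast
qed

lemma integrally_closed_if_maximal_avoiding:
  assumes max: "maximal_subring_avoiding x V T"
  shows "integrally_closed_in V T"
  unfolding integrally_closed_in_def
proof (intro ballI impI)
  fix z assume z: "z \<in> T" "integral_over V z"
  show "z \<in> V"
  proof (rule ccontr)
    assume "z \<notin> V"
    then have "adjoin V z \<noteq> V"
      using generator_in_adjoin[OF subring_V] by blast
    then have "x \<in> adjoin V z"
      using max subring_adjoin[OF subring_V] subset_adjoin[OF subring_V]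
        adjoin_subset[OF subring_T V_subset_T z(1)]
      unfolding maximal_subring_avoiding_def by blast
    then have "x \<in> V"
      using x_in_V_if_integral integral_over_adjoin[OF subring_V z(2)] by blast
    then show False
      using max unfolding maximal_subring_avoiding_def by blast
  qed
qed

lemma maximal_subring_if_maximal_avoiding:
  assumes max: "maximal_subring_avoiding x V T"
    and R: "R \<subseteq> adjoin V x" and integral: "\<forall>t\<in>T. integral_over R t"
  shows "maximal_subring V T"
  unfolding maximal_subring_def
proof (intro conjI allI impI)
  have T: "T \<subseteq> adjoin V x"
    using integral_mem_adjoin[OF R integrally_closed_if_maximal_avoiding[OF max]] integral by blast
  show "subring V"
    by (rule subring_V)
  show "V \<subset> T"
    using V_subset_T x_in_T max unfolding maximal_subring_avoiding_def by blast
  fix W assume W: "subring W \<and> V \<subseteq> W \<and> W \<subset> T"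
  show "W = V"
  proof (cases "x \<in> W")
    case True
    then have "T \<subseteq> W"
      using T adjoin_subset W by blast
    then show ?thesis
      using W by blast
  next
    case False
    then show ?thesis
      using max W unfolding maximal_subring_avoiding_def by blast
  qed
qed

end

lemma ideal_in_conductor:
  assumes T: "subring T" and V: "subring V"
  shows "ideal_in (conductor V T) T"
  unfolding ideal_in_def conductor_def
proof (intro conjI ballI CollectI; (elim CollectE conjE)?)
  show "0 \<in> T" "\<And>r. r * 0 \<in> V"
    using subring_zero[OF T] subring_zero[OF V] by simp_all
  fix a b assume "a \<in> T" "\<forall>r\<in>T. r * a \<in> V" "b \<in> T" "\<forall>r\<in>T. r * b \<in> V"
  then show "a - b \<in> T" "\<And>r. r \<in> T \<Longrightarrow> r * (a - b) \<in> V"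
    using subring_diff[OF T] subring_diff[OF V] by (auto simp: right_diff_distrib)
next
  fix a t assume "a \<in> T" "\<forall>r\<in>T. r * a \<in> V" "t \<in> T"
  then show "t * a \<in> T" "\<And>r. r \<in> T \<Longrightarrow> r * (t * a) \<in> V"
    using subring_mult[OF T] by (auto simp: mult.assoc[symmetric])
qed (auto)

lemma ideal_subset_conductor: "ideal_in Q T \<Longrightarrow> Q \<subseteq> V \<Longrightarrow> Q \<subseteq> conductor V T"
  unfolding conductor_def using ideal_in_subset ideal_in_mult_left by blast

lemma conductor_subset: "subring R \<Longrightarrow> conductor S R \<subseteq> S"
  unfolding conductor_def using subring_one by fastforce

lemma conductor_Int_subset:
  assumes "subring R" and "R \<subseteq> T"
  shows "conductor V T \<inter> R \<subseteq> conductor (V \<inter> R) R"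
  using assms unfolding conductor_def by (auto simp: subring_mult)

text \<open>An ideal strictly above the prime Q would contract to an ideal strictly above Q \<inter> R:
  take c \<in> I - Q and a relation c^n + d_(n-1) c^(n-1) + ... + d_0 \<in> Q with d_i \<in> R and n minimal;
  then d_0 \<in> I \<inter> R \<subseteq> Q, and since Q is prime we may cancel c, contradicting minimality.\<close>

lemma ideal_subset_prime_if_Int_subset:
  assumes R: "R \<subseteq> T" and T: "subring T" and integral: "\<forall>t\<in>T. integral_over R t"
    and Q: "prime_ideal_in Q T" and I: "ideal_in I T" "Q \<subseteq> I" "I \<inter> R \<subseteq> Q"
  shows "I \<subseteq> Q"
proof
  fix c assume cI: "c \<in> I"
  have Q_ideal: "ideal_in Q T" and "Q \<noteq> T" and prime: "\<forall>a\<in>T. \<forall>b\<in>T. a * b \<in> Q \<longrightarrow> a \<in> Q \<or> b \<in> Q"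
    using Q unfolding prime_ideal_in_def by auto
  have cT: "c \<in> T"
    using cI ideal_in_subset[OF I(1)] by blast
  define G where "G = {n. \<exists>d. (\<forall>i<n. d i \<in> R) \<and> c ^ n + (\<Sum>i<n. d i * c ^ i) \<in> Q}"
  obtain n0 d0 where "\<forall>i<n0. d0 i \<in> R" "c ^ n0 + (\<Sum>i<n0. d0 i * c ^ i) = 0"
    using integral cT unfolding integral_over_def by blast
  then have "n0 \<in> G"
    using ideal_in_zero[OF Q_ideal] unfolding G_def by (intro CollectI exI[of _ d0]) simp
  then have "\<exists>n. n \<in> G"
    by blast
  define n where "n = (LEAST n. n \<in> G)"
  have "n \<in> G" and minimal: "\<And>k. k < n \<Longrightarrow> k \<notin> G"
    unfolding n_def using \<open>\<exists>n. n \<in> G\<close> by (auto intro: LeastI_ex dest: not_less_Least)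
  then obtain d where d: "\<forall>i<n. d i \<in> R" and dQ: "c ^ n + (\<Sum>i<n. d i * c ^ i) \<in> Q"
    unfolding G_def by blast
  show "c \<in> Q"
  proof (cases n)
    case 0
    then show ?thesis
      using dQ ideal_in_eq_if_one_mem[OF Q_ideal] \<open>Q \<noteq> T\<close> by simp
  next
    case (Suc m)
    define w where "w = c ^ m + (\<Sum>i<m. d (Suc i) * c ^ i)"
    have dT: "d i \<in> T" if "i \<le> m" for i
      using d Suc that R by auto
    have wT: "w \<in> T"
      unfolding w_def
      by (intro subring_add[OF T] subring_power[OF T cT] subring_sum[OF T] subring_mult[OF T] dT) auto
    have rel: "c * w + d 0 \<in> Q"
      using dQ unfolding Suc w_def sum.lessThan_Suc_shift
      by (simp add: distrib_left sum_distrib_left algebra_simps)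
    have "c * w \<in> I"
      using ideal_in_mult_right[OF I(1) cI wT] .
    then have "d 0 \<in> I"
      using ideal_in_diff[OF I(1) _ \<open>c * w \<in> I\<close>, of "c * w + d 0"] rel I(2) by auto
    then have "d 0 \<in> Q"
      using I(3) d Suc by auto
    then have "c * w \<in> Q"
      using ideal_in_diff[OF Q_ideal rel] by fastforce
    then have "c \<in> Q \<or> w \<in> Q"
      using prime cT wT by blast
    moreover have "w \<notin> Q"
      using minimal[of m] d Suc unfolding G_def w_def by fastforce
    ultimately show ?thesis
      by blast
  qed
qed

lemma conductor_eq_prime_if_contraction_subset:
  assumes R: "subring R" "R \<subseteq> T" "\<forall>t\<in>T. integral_over R t" and T: "subring T"
    and Q: "prime_ideal_in Q T" and V: "subring V" "Q \<subseteq> V" and "conductor (V \<inter> R) R \<subseteq> Q"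
  shows "conductor V T = Q"
proof
  have "ideal_in Q T"
    using Q by (simp add: prime_ideal_in_def)
  then show "Q \<subseteq> conductor V T"
    using ideal_subset_conductor V(2) by blast
  moreover have "conductor V T \<inter> R \<subseteq> Q"
    using conductor_Int_subset[OF R(1,2), of V] assms(8) by blast
  ultimately show "conductor V T \<subseteq> Q"
    using ideal_subset_prime_if_Int_subset[OF R(2) T R(3) Q ideal_in_conductor[OF T V(1)]] by blast
qed

lemma subring_plus_ideal:
  assumes S: "subring S" "S \<subseteq> T" and Q: "ideal_in Q T"
  shows "subring {s + q | s q. s \<in> S \<and> q \<in> Q}"
  unfolding subring_def
proof (intro conjI ballI)
  show "1 \<in> {s + q | s q. s \<in> S \<and> q \<in> Q}"
    using subring_one[OF S(1)] ideal_in_zero[OF Q] by force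
  fix a b assume "a \<in> {s + q | s q. s \<in> S \<and> q \<in> Q}" "b \<in> {s + q | s q. s \<in> S \<and> q \<in> Q}"
  then obtain s q s' q' where a: "a = s + q" "s \<in> S" "q \<in> Q" and b: "b = s' + q'" "s' \<in> S" "q' \<in> Q"
    by blast
  have "a - b = (s - s') + (q - q')" "a * b = s * s' + (s * q' + s' * q + q * q')"
    using a b by (simp_all add: algebra_simps)
  moreover have "s * q' + s' * q + q * q' \<in> Q"
    using a b S(2) ideal_in_subset[OF Q]
    by (intro ideal_in_add[OF Q] ideal_in_mult_left[OF Q]) auto
  ultimately show "a - b \<in> {s + q | s q. s \<in> S \<and> q \<in> Q}" "a * b \<in> {s + q | s q. s \<in> S \<and> q \<in> Q}"
    using a b subring_diff[OF S(1)] subring_mult[OF S(1)] ideal_in_diff[OF Q] by blast+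
qed

lemma exists_maximal_subring_avoiding_plus_ideal:
  assumes T: "subring T" and S: "subring S" "S \<subseteq> T" and Q: "ideal_in Q T"
    and x: "\<forall>s\<in>S. x - s \<notin> Q"
  shows "\<exists>V. S \<subseteq> V \<and> Q \<subseteq> V \<and> maximal_subring_avoiding x V T"
proof -
  define B where "B = {s + q | s q. s \<in> S \<and> q \<in> Q}"
  have B: "subring B"
    unfolding B_def using subring_plus_ideal[OF S Q] .
  have BT: "B \<subseteq> T"
    unfolding B_def using S(2) ideal_in_subset[OF Q] subring_add[OF T] by blast
  have "x \<notin> B"
  proof
    assume "x \<in> B"
    then obtain s q where "x = s + q" "s \<in> S" "q \<in> Q"
      unfolding B_def by blast
    then show False
      using x by auto
  qed
  then obtain V where "B \<subseteq> V" "maximal_subring_avoiding x V T"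
    using exists_maximal_subring_avoiding[OF B BT] by blast
  moreover have "S \<subseteq> B"
  proof
    fix s assume "s \<in> S"
    then show "s \<in> B"
      unfolding B_def using ideal_in_zero[OF Q] by (intro CollectI exI[of _ s] exI[of _ 0]) simp
  qed
  moreover have "Q \<subseteq> B"
  proof
    fix q assume "q \<in> Q"
    then show "q \<in> B"
      unfolding B_def using subring_zero[OF S(1)] by (intro CollectI exI[of _ 0] exI[of _ q]) simp
  qed
  ultimately show ?thesis
    by blast
qed

theorem theorem3p4:
  fixes R T Q :: "'a::comm_ring_1 set"
  assumes "integral_extension R T"
    and "prime_ideal_in Q T"
    and "P = Q \<inter> R"
    and "maximal_subring S R"
    and "integrally_closed_in S R"
    and "conductor S R = P"
    and "units_quot_not_sub R P S"
  shows "\<exists>V. maximal_subring V T \<and> integrally_closed_in V T \<and> conductor V T = Q"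
proof -
  have R: "subring R" "R \<subseteq> T" "\<forall>t\<in>T. integral_over R t" and T: "subring T"
    and Q: "ideal_in Q T" and S: "subring S" "S \<subseteq> R"
    using assms(1,2,4) by (auto simp: integral_extension_def prime_ideal_in_def maximal_subring_def)
  have P: "ideal_in P R" "P \<subseteq> S"
    using ideal_in_Int_subring[OF Q R(1,2)] conductor_subset[OF R(1)] assms(3,6) by (auto simp: Int_commute)
  obtain x y where x: "x \<in> R" "x \<notin> S" "\<forall>s\<in>S. x - s \<notin> P" and y: "y \<in> S" "x * y - 1 \<in> P"
    using units_quot_not_sub_inverse_in_maximal_subring[OF R(1) assms(4,5) P assms(7)] by blast
  have "\<forall>s\<in>S. x - s \<notin> Q"
    using x(1,3) S(2) subring_diff[OF R(1)] assms(3) by blast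
  then obtain V where V: "maximal_subring_avoiding x V T" and "S \<subseteq> V" "Q \<subseteq> V"
    using exists_maximal_subring_avoiding_plus_ideal[OF T S(1) _ Q] S(2) R(2) by blast
  then interpret inverse_mod_ideal T Q V x y
    using T Q x(1) y R(2) assms(3) by unfold_locales (auto simp: maximal_subring_avoiding_def)
  have "R \<subseteq> adjoin V x"
    using maximal_subring_adjoin_eq[OF assms(4) R(1) x(1,2)] adjoin_mono[OF \<open>S \<subseteq> V\<close>] by blast
  then have "maximal_subring V T"
    using maximal_subring_if_maximal_avoiding[OF V] R(3) by blast
  moreover have "V \<inter> R = S"
    using maximal_subring_Int_eq[OF assms(4) R(1) subring_V \<open>S \<subseteq> V\<close> x(1)] V
    by (simp add: maximal_subring_avoiding_def)
  then have "conductor V T = Q"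
    using conductor_eq_prime_if_contraction_subset[OF R T assms(2) subring_V ideal_subset_V] assms(3,6)
    by simp
  ultimately show ?thesis
    using integrally_closed_if_maximal_avoiding[OF V] by (intro exI[of _ V] conjI)
qed

end
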